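(* Let $h_0\in(0,2\pi)$, $\alpha>0$ and $T>0$ be constants. Let $k\colon[0,2\pi]\to(0,+\infty)$ be a twice continuously differentiable positive function with $k(0)=k(2\pi)$, $k'(0)=k'(2\pi)$, and let $\varphi\colon[-h_0,2\pi]\to[0,+\infty)$ be a twice continuously differentiable nonnegative function with $\int_0^{2\pi}\varphi(x)\,\mathrm{d}x=1$ and $\varphi(x)=\varphi(x+2\pi)$ for all $x\in[-h_0,0]$. Suppose that for every $h\in(0,h_0]$ there exists a solution $u_h\in\mathbf C^{2,1}([0,2\pi]\times[0,T])$ of the problem $$\frac{\partial u(x,t)}{\partial t}=u(x,t)\bigl(k(x)\,u(x-h,t)-f[u(\cdot,t)]\bigr)+\alpha\frac{\partial^2u(x,t)}{\partial x^2},\quad 0\le x\le 2\pi,\ 0\le t\le T,$$ $$u(x,0)=\varphi(x),\qquad u(0,t)=u(2\pi,t),\qquad \frac{\partial u}{\partial x}(0,t)=\frac{\partial u}{\partial x}(2\pi,t),$$ where $u(x-h,t):=u(x-h+2\pi,t)$ whenever $x-h<0$ and $f[u(\cdot,t)]=\int_0^{2\pi}k(x)\,u(x,t)\,u(x-h,t)\,\mathrm{d}x$. Assume moreover that $$\sup_{0<h\le h_0}\|u_h\|_{\mathbf C^{2,1}([0,2\pi]\times[0,T])}<\infty.$$ Then there exists $h^*\in(0,h_0]$ such that $u_h$ is a nonnegative function on $[0,2\pi]\times[0,T]$ for every $h\in(0,h^*]$.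
   Context: $\mathbf C^{2,1}([0,2\pi]\times[0,T])$ denotes the Banach space of continuous functions $w(x,t)$ on $[0,2\pi]\times[0,T]$ such that $\partial w/\partial x$, $\partial^2 w/\partial x^2$, $\partial w/\partial t$ are continuous on $[0,2\pi]\times[0,T]$ (continuity up to the boundary meaning the limits from the interior exist and are taken as boundary values), with norm $$\|w\|_{\mathbf C^{2,1}}=\max_{0\le x\le2\pi,\,0\le t\le T}\Bigl\{|w|+\Bigl|\tfrac{\partial w}{\partial x}\Bigr|+\Bigl|\tfrac{\partial^2 w}{\partial x^2}\Bigr|+\Bigl|\tfrac{\partial w}{\partial t}\Bigr|\Bigr\}.$$ *)

theory Defs
  imports "HOL-Analysis.Analysis"
begin

definition C2_on :: "real \<Rightarrow> real \<Rightarrow> (real \<Rightarrow> real) \<Rightarrow> (real \<Rightarrow> real) \<Rightarrow> (real \<Rightarrow> real) \<Rightarrow> bool" where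
  "C2_on a b f f' f'' \<longleftrightarrow>
     continuous_on {a..b} f \<and> continuous_on {a..b} f' \<and> continuous_on {a..b} f'' \<and>
     (\<forall>x\<in>{a..b}. (f has_real_derivative f' x) (at x within {a..b}) \<and>
                  (f' has_real_derivative f'' x) (at x within {a..b}))"

definition C21 :: "real \<Rightarrow> (real \<Rightarrow> real \<Rightarrow> real) \<Rightarrow> (real \<Rightarrow> real \<Rightarrow> real) \<Rightarrow>
     (real \<Rightarrow> real \<Rightarrow> real) \<Rightarrow> (real \<Rightarrow> real \<Rightarrow> real) \<Rightarrow> bool" where
  "C21 T w wx wxx wt \<longleftrightarrow>
     continuous_on ({0..2*pi} \<times> {0..T}) (\<lambda>(x,t). w x t) \<and>
     continuous_on ({0..2*pi} \<times> {0..T}) (\<lambda>(x,t). wx x t) \<and>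
     continuous_on ({0..2*pi} \<times> {0..T}) (\<lambda>(x,t). wxx x t) \<and>
     continuous_on ({0..2*pi} \<times> {0..T}) (\<lambda>(x,t). wt x t) \<and>
     (\<forall>x\<in>{0..2*pi}. \<forall>t\<in>{0..T}.
        ((\<lambda>y. w y t) has_real_derivative wx x t) (at x within {0..2*pi}) \<and>
        ((\<lambda>y. wx y t) has_real_derivative wxx x t) (at x within {0..2*pi}) \<and>
        ((\<lambda>s. w x s) has_real_derivative wt x t) (at t within {0..T}))"

definition shift :: "real \<Rightarrow> real \<Rightarrow> real" where
  "shift h x = (if x - h < 0 then x - h + 2*pi else x - h)"

definition fterm :: "(real \<Rightarrow> real) \<Rightarrow> real \<Rightarrow> (real \<Rightarrow> real \<Rightarrow> real) \<Rightarrow> real \<Rightarrow> real" where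
  "fterm k h w t = integral {0..2*pi} (\<lambda>x. k x * w x t * w (shift h x) t)"

end

theory Submission imports Defs begin

text \<open>In fact every \<open>u\<^sub>h\<close> is nonnegative, so \<open>h\<^sup>* = h\<^sub>0\<close> works. For fixed \<open>h\<close> the equation is
  linear in \<open>u\<close>: \<open>u\<^sub>t = c u + \<alpha> u\<^sub>x\<^sub>x\<close> with \<open>c(x,t) = k(x) u(x-h,t) - f[u(\<cdot>,t)]\<close>, and \<open>|c| \<le> C\<close>.
  If \<open>u\<close> took a negative value, then \<open>v = exp(-(C+1)t) u\<close> would attain a negative minimum at
  some \<open>(x,t)\<close> with \<open>t > 0\<close>, since \<open>u(\<cdot>,0) = \<phi> \<ge> 0\<close>. There \<open>v\<^sub>t \<le> 0\<close>, i.e. \<open>u\<^sub>t \<le> (C+1) u\<close>, and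
  \<open>u\<^sub>x\<^sub>x \<ge> 0\<close>, also when \<open>x\<close> is an endpoint, by the periodic boundary conditions. But then
  \<open>u\<^sub>t - (C+1) u = (c - C - 1) u + \<alpha> u\<^sub>x\<^sub>x > 0\<close>.\<close>

lemma has_real_derivative_nonpos_at_min_from_left:
  fixes f :: "real \<Rightarrow> real"
  assumes der: "(f has_real_derivative D) (at x within S)"
    and min: "\<forall>s\<in>S. f x \<le> f s" and "y < x" "{y..x} \<subseteq> S"
  shows "D \<le> 0"
proof (rule ccontr)
  assume "\<not> D \<le> 0"
  then obtain d where "d > 0" and d: "\<And>h. h > 0 \<Longrightarrow> x - h \<in> S \<Longrightarrow> h < d \<Longrightarrow> f (x - h) < f x"
    using has_real_derivative_pos_inc_left[OF der] by force
  define h where "h = min d (x - y) / 2"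
  have "h > 0" "h < d" "x - h \<in> S"
    using \<open>d > 0\<close> \<open>y < x\<close> \<open>{y..x} \<subseteq> S\<close> unfolding h_def by (auto simp: min_def field_simps)
  then show False using d min by fastforce
qed

lemma has_real_derivative_nonneg_at_min_from_right:
  fixes f :: "real \<Rightarrow> real"
  assumes der: "(f has_real_derivative D) (at x within S)"
    and min: "\<forall>s\<in>S. f x \<le> f s" and "x < y" "{x..y} \<subseteq> S"
  shows "D \<ge> 0"
proof (rule ccontr)
  assume "\<not> D \<ge> 0"
  then obtain d where "d > 0" and d: "\<And>h. h > 0 \<Longrightarrow> x + h \<in> S \<Longrightarrow> h < d \<Longrightarrow> f (x + h) < f x"
    using has_real_derivative_neg_dec_right[OF der] by force
  define h where "h = min d (y - x) / 2"
  have "h > 0" "h < d" "x + h \<in> S"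
    using \<open>d > 0\<close> \<open>x < y\<close> \<open>{x..y} \<subseteq> S\<close> unfolding h_def by (auto simp: min_def field_simps)
  then show False using d min by fastforce
qed

lemma second_derivative_nonneg_at_critical_min:
  fixes f f' f'' :: "real \<Rightarrow> real"
  assumes df: "\<forall>x\<in>{a..b}. (f has_real_derivative f' x) (at x within {a..b})"
    and df': "(f' has_real_derivative f'' x) (at x within {a..b})"
    and x: "a \<le> x" "x < b" and crit: "f' x = 0"
    and min: "\<forall>s\<in>{a..b}. f x \<le> f s"
  shows "f'' x \<ge> 0"
proof (rule ccontr)
  assume "\<not> f'' x \<ge> 0"
  then obtain d where "d > 0"
    and d: "\<And>h. h > 0 \<Longrightarrow> x + h \<in> {a..b} \<Longrightarrow> h < d \<Longrightarrow> f' (x + h) < 0"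
    using has_real_derivative_neg_dec_right[OF df'] crit by force
  define y where "y = x + min d (b - x) / 2"
  have y: "x < y" "y < x + d" "y \<le> b" using \<open>d > 0\<close> x unfolding y_def by (auto simp: min_def field_simps)
  have "\<exists>\<xi>\<in>{x<..<y}. f y - f x = f' \<xi> * (y - x)"
  proof (rule mvt_simple[OF \<open>x < y\<close>])
    fix s assume "x \<le> s" "s \<le> y"
    then have "(f has_real_derivative f' s) (at s within {x..y})"
      using x y by (intro DERIV_subset[OF df[rule_format]]) auto
    then show "(f has_derivative (*) (f' s)) (at s within {x..y})"
      by (simp add: has_field_derivative_def)
  qed
  then obtain \<xi> where \<xi>: "\<xi> \<in> {x<..<y}" "f y - f x = f' \<xi> * (y - x)" by blast
  have "f' \<xi> < 0" using d[of "\<xi> - x"] \<xi>(1) x y by auto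
  then have "f y < f x" using \<xi> mult_neg_pos[of "f' \<xi>" "y - x"] by auto
  moreover have "f x \<le> f y" using min x y by simp
  ultimately show False by simp
qed

text \<open>At a minimum in \<open>a\<close> the one-sided conditions \<open>f'(a) \<ge> 0\<close> and \<open>f'(b) \<le> 0\<close> combine,
  through \<open>f'(a) = f'(b)\<close>, to \<open>f'(a) = 0\<close>. The point \<open>b\<close> itself must be excluded: periodicity of
  \<open>f\<close> and \<open>f'\<close> says nothing about \<open>f''(b)\<close>.\<close>
lemma second_derivative_nonneg_at_periodic_min:
  fixes f f' f'' :: "real \<Rightarrow> real"
  assumes df: "\<forall>x\<in>{a..b}. (f has_real_derivative f' x) (at x within {a..b})"
    and df': "\<forall>x\<in>{a..b}. (f' has_real_derivative f'' x) (at x within {a..b})"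
    and per: "f a = f b" "f' a = f' b"
    and x: "a \<le> x" "x < b" and min: "\<forall>s\<in>{a..b}. f x \<le> f s"
  shows "f'' x \<ge> 0"
proof -
  have der: "(f has_real_derivative f' x) (at x within {a..b})" using df x by auto
  have "f' x \<ge> 0"
    using x by (intro has_real_derivative_nonneg_at_min_from_right[OF der min x(2)]) auto
  moreover have "f' x \<le> 0"
  proof (cases "x = a")
    case True
    have "\<forall>s\<in>{a..b}. f b \<le> f s" using min per True by auto
    then have "f' b \<le> 0"
      using x df by (intro has_real_derivative_nonpos_at_min_from_left[of f _ b _ a]) auto
    then show ?thesis using True per by simp
  next
    case False
    then show ?thesis
      using x by (intro has_real_derivative_nonpos_at_min_from_left[OF der min, of a]) auto
  qed
  ultimately show ?thesis
    using x df' by (intro second_derivative_nonneg_at_critical_min[OF df _ x _ min]) auto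
qed

lemma derivative_le_at_exp_weighted_min:
  fixes g :: "real \<Rightarrow> real"
  assumes der: "(g has_real_derivative g') (at t within {a..b})"
    and t: "a < t" "t \<le> b"
    and min: "\<forall>s\<in>{a..b}. exp (- l * t) * g t \<le> exp (- l * s) * g s"
  shows "g' \<le> l * g t"
proof -
  have "((\<lambda>s. exp (- l * s) * g s) has_real_derivative exp (- l * t) * (g' - l * g t))
      (at t within {a..b})"
    using der by (auto intro!: derivative_eq_intros simp: algebra_simps)
  then have "exp (- l * t) * (g' - l * g t) \<le> 0"
    using t by (intro has_real_derivative_nonpos_at_min_from_left[OF _ min t(1)]) auto
  then show ?thesis by (simp add: mult_le_0_iff)
qed

lemma abs_integral_le_of_abs_le:
  fixes f :: "real \<Rightarrow> real"
  assumes "a \<le> b" and bound: "\<forall>x\<in>{a..b}. \<bar>f x\<bar> \<le> B"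
  shows "\<bar>integral {a..b} f\<bar> \<le> B * (b - a)"
proof (cases "f integrable_on {a..b}")
  case True
  have "norm (integral {a..b} f) \<le> integral {a..b} (\<lambda>_. B)"
    using bound by (intro integral_norm_bound_integral[OF True]) auto
  then show ?thesis using \<open>a \<le> b\<close> by (simp add: mult.commute)
next
  case False
  have "B \<ge> 0" using bound \<open>a \<le> b\<close> by force
  then show ?thesis using False \<open>a \<le> b\<close> by (simp add: not_integrable_integral)
qed

lemma shift_in_period: "0 \<le> h \<Longrightarrow> h \<le> 2*pi \<Longrightarrow> x \<in> {0..2*pi} \<Longrightarrow> shift h x \<in> {0..2*pi}"
  unfolding shift_def by auto

lemma abs_fterm_le:
  assumes "0 \<le> h" "h \<le> 2*pi"
    and K: "\<forall>x\<in>{0..2*pi}. \<bar>k x\<bar> \<le> K" and M: "\<forall>x\<in>{0..2*pi}. \<bar>w x t\<bar> \<le> M"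
  shows "\<bar>fterm k h w t\<bar> \<le> K * M * M * (2*pi)"
proof -
  have "K \<ge> 0" "M \<ge> 0" using K M by force+
  have "\<bar>k x * w x t * w (shift h x) t\<bar> \<le> K * M * M" if "x \<in> {0..2*pi}" for x
    unfolding abs_mult using that shift_in_period[OF assms(1,2) that] K M \<open>K \<ge> 0\<close> \<open>M \<ge> 0\<close>
    by (intro mult_mono) auto
  then have "\<bar>fterm k h w t\<bar> \<le> K * M * M * (2*pi - 0)"
    unfolding fterm_def by (intro abs_integral_le_of_abs_le) auto
  then show ?thesis by simp
qed

lemma abs_reaction_coefficient_le:
  assumes "0 \<le> h" "h \<le> 2*pi" "x \<in> {0..2*pi}"
    and K: "\<forall>x\<in>{0..2*pi}. \<bar>k x\<bar> \<le> K" and M: "\<forall>x\<in>{0..2*pi}. \<bar>w x t\<bar> \<le> M"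
  shows "\<bar>k x * w (shift h x) t - fterm k h w t\<bar> \<le> K * M + K * M * M * (2*pi)"
proof -
  have "\<bar>k x * w (shift h x) t\<bar> \<le> K * M"
    unfolding abs_mult using assms shift_in_period by (intro mult_mono) force+
  moreover have "\<bar>fterm k h w t\<bar> \<le> K * M * M * (2*pi)" using assms by (intro abs_fterm_le)
  ultimately show ?thesis by linarith
qed

lemma negative_min_of_periodic_continuous:
  fixes v :: "real \<Rightarrow> real \<Rightarrow> real"
  assumes cont: "continuous_on ({0..2*pi} \<times> {0..T}) (\<lambda>(x, t). v x t)"
    and per: "\<forall>t\<in>{0..T}. v 0 t = v (2*pi) t"
    and neg: "x \<in> {0..2*pi}" "t \<in> {0..T}" "v x t < 0"
  obtains x0 t0 where "0 \<le> x0" "x0 < 2*pi" "t0 \<in> {0..T}" "v x0 t0 < 0"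
    "\<forall>y\<in>{0..2*pi}. \<forall>s\<in>{0..T}. v x0 t0 \<le> v y s"
proof -
  obtain p where p: "p \<in> {0..2*pi} \<times> {0..T}"
    and p_min: "\<forall>q\<in>{0..2*pi} \<times> {0..T}. v (fst p) (snd p) \<le> v (fst q) (snd q)"
    using continuous_attains_inf[OF compact_Times[OF compact_Icc compact_Icc] _ cont] neg
    by (fastforce simp: case_prod_unfold)
  define x0 where "x0 = (if fst p = 2*pi then 0 else fst p)"
  have x0: "0 \<le> x0" "x0 < 2*pi" using p unfolding x0_def by auto
  have "v x0 (snd p) = v (fst p) (snd p)" using per p unfolding x0_def by auto
  then have min: "\<forall>y\<in>{0..2*pi}. \<forall>s\<in>{0..T}. v x0 (snd p) \<le> v y s" using p_min by fastforce
  then have "v x0 (snd p) < 0" using neg by fastforce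
  then show ?thesis using that x0 p min by auto
qed

lemma periodic_parabolic_minimum_principle:
  fixes w wx wxx wt c :: "real \<Rightarrow> real \<Rightarrow> real"
  assumes reg: "C21 T w wx wxx wt" and "\<alpha> \<ge> 0"
    and c_bound: "\<forall>x\<in>{0..2*pi}. \<forall>t\<in>{0..T}. \<bar>c x t\<bar> \<le> C"
    and eq: "\<forall>x\<in>{0..2*pi}. \<forall>t\<in>{0..T}. wt x t = c x t * w x t + \<alpha> * wxx x t"
    and bc: "\<forall>t\<in>{0..T}. w 0 t = w (2*pi) t \<and> wx 0 t = wx (2*pi) t"
    and init: "\<forall>x\<in>{0..2*pi}. w x 0 \<ge> 0"
  shows "\<forall>x\<in>{0..2*pi}. \<forall>t\<in>{0..T}. w x t \<ge> 0"
proof (rule ccontr)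
  assume "\<not> ?thesis"
  then obtain x t where xt: "x \<in> {0..2*pi}" "t \<in> {0..T}" "w x t < 0" by auto
  define l where "l = C + 1"
  have "continuous_on ({0..2*pi} \<times> {0..T}) (\<lambda>(x, t). w x t)" using reg unfolding C21_def by blast
  then have cont: "continuous_on ({0..2*pi} \<times> {0..T}) (\<lambda>(x, t). exp (- l * t) * w x t)"
    unfolding case_prod_unfold by (intro continuous_intros)
  have per: "\<forall>t\<in>{0..T}. exp (- l * t) * w 0 t = exp (- l * t) * w (2*pi) t" using bc by simp
  have "exp (- l * t) * w x t < 0" using xt(3) by (simp add: mult_pos_neg)
  then obtain x0 t0 where x0: "0 \<le> x0" "x0 < 2*pi" and t0: "t0 \<in> {0..T}"
    and neg: "exp (- l * t0) * w x0 t0 < 0"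
    and min: "\<forall>y\<in>{0..2*pi}. \<forall>s\<in>{0..T}. exp (- l * t0) * w x0 t0 \<le> exp (- l * s) * w y s"
    using negative_min_of_periodic_continuous[OF cont per xt(1,2)] by blast
  have w_neg: "w x0 t0 < 0" using neg by (simp add: mult_less_0_iff)
  have "t0 \<noteq> 0" using init w_neg x0 by force
  then have "0 < t0" using t0 by simp
  have dx: "\<forall>y\<in>{0..2*pi}. ((\<lambda>y. w y t0) has_real_derivative wx y t0) (at y within {0..2*pi})"
    and dxx: "\<forall>y\<in>{0..2*pi}. ((\<lambda>y. wx y t0) has_real_derivative wxx y t0) (at y within {0..2*pi})"
    and dt: "((\<lambda>s. w x0 s) has_real_derivative wt x0 t0) (at t0 within {0..T})"
    using reg t0 x0 unfolding C21_def by auto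
  have "\<forall>y\<in>{0..2*pi}. w x0 t0 \<le> w y t0"
  proof
    fix y assume "y \<in> {0..2*pi}"
    then have "exp (- l * t0) * w x0 t0 \<le> exp (- l * t0) * w y t0" using min t0 by blast
    then show "w x0 t0 \<le> w y t0" by simp
  qed
  then have "wxx x0 t0 \<ge> 0"
    using t0 bc by (intro second_derivative_nonneg_at_periodic_min[OF dx dxx _ _ x0]) auto
  have "wt x0 t0 \<le> l * w x0 t0"
    using min x0 t0 by (intro derivative_le_at_exp_weighted_min[OF dt \<open>0 < t0\<close>]) auto
  moreover have "\<bar>c x0 t0\<bar> \<le> C" using c_bound x0 t0 by simp
  then have "(c x0 t0 - l) * w x0 t0 > 0" using w_neg unfolding l_def by (intro mult_neg_neg) auto
  moreover have "wt x0 t0 - l * w x0 t0 = (c x0 t0 - l) * w x0 t0 + \<alpha> * wxx x0 t0"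
    using eq x0 t0 by (simp add: algebra_simps)
  moreover have "\<alpha> * wxx x0 t0 \<ge> 0" using \<open>\<alpha> \<ge> 0\<close> \<open>wxx x0 t0 \<ge> 0\<close> by simp
  ultimately show False by linarith
qed

theorem theorem4:
  fixes h0 \<alpha> T :: real
    and k k' k'' \<phi> \<phi>' \<phi>'' :: "real \<Rightarrow> real"
    and u ux uxx ut :: "real \<Rightarrow> real \<Rightarrow> real \<Rightarrow> real"
  assumes h0: "0 < h0" "h0 < 2*pi"
    and alpha: "0 < \<alpha>" and T: "0 < T"
    and k_C2: "C2_on 0 (2*pi) k k' k''"
    and k_pos: "\<forall>x\<in>{0..2*pi}. k x > 0"
    and k_per: "k 0 = k (2*pi)" "k' 0 = k' (2*pi)"
    and phi_C2: "C2_on (-h0) (2*pi) \<phi> \<phi>' \<phi>''"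
    and phi_nonneg: "\<forall>x\<in>{-h0..2*pi}. \<phi> x \<ge> 0"
    and phi_int: "integral {0..2*pi} \<phi> = 1"
    and phi_per: "\<forall>x\<in>{-h0..0}. \<phi> x = \<phi> (x + 2*pi)"
    and sol_reg: "\<forall>h\<in>{0<..h0}. C21 T (u h) (ux h) (uxx h) (ut h)"
    and sol_eq: "\<forall>h\<in>{0<..h0}. \<forall>x\<in>{0..2*pi}. \<forall>t\<in>{0..T}.
        ut h x t = u h x t * (k x * u h (shift h x) t - fterm k h (u h) t) + \<alpha> * uxx h x t"
    and sol_init: "\<forall>h\<in>{0<..h0}. \<forall>x\<in>{0..2*pi}. u h x 0 = \<phi> x"
    and sol_bc: "\<forall>h\<in>{0<..h0}. \<forall>t\<in>{0..T}. u h 0 t = u h (2*pi) t \<and> ux h 0 t = ux h (2*pi) t"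
    and bounded: "\<exists>M. \<forall>h\<in>{0<..h0}. \<forall>x\<in>{0..2*pi}. \<forall>t\<in>{0..T}.
        \<bar>u h x t\<bar> + \<bar>ux h x t\<bar> + \<bar>uxx h x t\<bar> + \<bar>ut h x t\<bar> \<le> M"
  shows "\<exists>hs\<in>{0<..h0}. \<forall>h\<in>{0<..hs}. \<forall>x\<in>{0..2*pi}. \<forall>t\<in>{0..T}. u h x t \<ge> 0"
proof
  show "h0 \<in> {0<..h0}" using h0 by simp
  show "\<forall>h\<in>{0<..h0}. \<forall>x\<in>{0..2*pi}. \<forall>t\<in>{0..T}. u h x t \<ge> 0"
  proof
    fix h assume h: "h \<in> {0<..h0}"
    obtain M where "\<forall>x\<in>{0..2*pi}. \<forall>t\<in>{0..T}.
        \<bar>u h x t\<bar> + \<bar>ux h x t\<bar> + \<bar>uxx h x t\<bar> + \<bar>ut h x t\<bar> \<le> M"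
      using bounded h by blast
    then have M: "\<forall>x\<in>{0..2*pi}. \<forall>t\<in>{0..T}. \<bar>u h x t\<bar> \<le> M" by (smt (verit) abs_ge_zero)
    have "continuous_on {0..2*pi} k" using k_C2 unfolding C2_on_def by blast
    then have "bounded (k ` {0..2*pi})" by (intro compact_imp_bounded compact_continuous_image) auto
    then obtain K where K: "\<forall>x\<in>{0..2*pi}. \<bar>k x\<bar> \<le> K" unfolding bounded_iff by auto
    have reg: "C21 T (u h) (ux h) (uxx h) (ut h)" using sol_reg h by blast
    show "\<forall>x\<in>{0..2*pi}. \<forall>t\<in>{0..T}. u h x t \<ge> 0"
    proof (rule periodic_parabolic_minimum_principle
        [OF reg, where \<alpha> = \<alpha> and c = "\<lambda>x t. k x * u h (shift h x) t - fterm k h (u h) t"])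
      show "\<forall>x\<in>{0..2*pi}. \<forall>t\<in>{0..T}.
          \<bar>k x * u h (shift h x) t - fterm k h (u h) t\<bar> \<le> K * M + K * M * M * (2*pi)"
        using h h0 K M by (intro ballI abs_reaction_coefficient_le) auto
      show "\<forall>x\<in>{0..2*pi}. \<forall>t\<in>{0..T}. ut h x t =
          (k x * u h (shift h x) t - fterm k h (u h) t) * u h x t + \<alpha> * uxx h x t"
        using sol_eq h by (simp add: mult.commute)
      show "\<forall>t\<in>{0..T}. u h 0 t = u h (2*pi) t \<and> ux h 0 t = ux h (2*pi) t" using sol_bc h by blast
      show "\<forall>x\<in>{0..2*pi}. u h x 0 \<ge> 0" using sol_init phi_nonneg h h0 by auto
    qed (use alpha in simp)
  qed
qed

end
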